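(* Let $V$ be an irreducible $\tau$-module with finite-dimensional weight spaces, and let $z\in\mathcal Z$ be homogeneous of degree $\underline m$ acting non-trivially on $V$. Then there exists a central operator $T$ on $V$ of degree $-\underline m$ (not necessarily given by an element of $\mathcal Z$) such that $Tz=zT=\mathrm{Id}_V$.
   Context: Let $\mathring{\mathfrak g}$ be a finite-dimensional simple Lie algebra over $\mathbb C$ with Cartan subalgebra $\mathring{\mathfrak h}$ and a nondegenerate invariant symmetric bilinear form $(\cdot,\cdot)$. Fix $n\ge2$, $A=\mathbb C[t_1^{\pm1},\dots,t_n^{\pm1}]$, $t^{\underline m}=t_1^{m_1}\cdots t_n^{m_n}$. Let $\mathcal Z$ be spanned by symbols $t^{\underline m}K_i$ subject to $\sum_im_it^{\underline m}K_i=0$; $K_i=t^0K_i$; $d(t^{\underline r})t^{\underline s}=\sum_ir_it^{\underline r+\underline s}K_i$. The toroidal Lie algebra $\tau=\mathring{\mathfrak g}\otimes A\oplus\mathcal Z\oplus D$, $D=\mathrm{span}(d_1,\dots,d_n)$, has bracket $[X\otimes t^{\underline r},Y\otimes t^{\underline s}]=[X,Y]\otimes t^{\underline r+\underline s}+(X,Y)d(t^{\underline r})t^{\underline s}$, $\mathcal Z$ central in $\mathring{\mathfrak g}\otimes A\oplus\mathcal Z$, $[d_i,X\otimes t^{\underline r}]=r_iX\otimes t^{\underline r}$, $[d_i,t^{\underline m}K_j]=m_it^{\underline m}K_j$, $[d_i,d_j]=0$. Weight spaces are with respect to $\underline{\mathfrak h}=\mathring{\mathfrak h}\oplus\mathrm{span}(K_i)\oplus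 D$. An element of $\mathcal Z$ is homogeneous of degree $\underline m$ if it is a combination of the $t^{\underline m}K_i$. A central operator of degree $\underline m$ on $V$ is a linear map $T:V\to V$ commuting with the action of $\mathring{\mathfrak g}\otimes A\oplus\mathcal Z$ and satisfying $d_iT-Td_i=m_iT$ for all $i$. *)

theory Defs
  imports Complex_Main
begin

definition fin_dim :: "(complex \<Rightarrow> 'a \<Rightarrow> 'a::ab_group_add) \<Rightarrow> bool" where
  "fin_dim s \<longleftrightarrow> (\<exists>B. finite B \<and> module.span s B = UNIV)"

definition lie_algebra :: "(complex \<Rightarrow> 'g \<Rightarrow> 'g::ab_group_add) \<Rightarrow> ('g \<Rightarrow> 'g \<Rightarrow> 'g) \<Rightarrow> bool" where
  "lie_algebra s br \<longleftrightarrow> vector_space s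
     \<and> (\<forall>x. Vector_Spaces.linear s s (br x))
     \<and> (\<forall>y. Vector_Spaces.linear s s (\<lambda>x. br x y))
     \<and> (\<forall>x. br x x = 0)
     \<and> (\<forall>x y z. br x (br y z) + br y (br z x) + br z (br x y) = 0)"

definition lie_ideal :: "(complex \<Rightarrow> 'g \<Rightarrow> 'g::ab_group_add) \<Rightarrow> ('g \<Rightarrow> 'g \<Rightarrow> 'g) \<Rightarrow> 'g set \<Rightarrow> bool" where
  "lie_ideal s br I \<longleftrightarrow> module.subspace s I \<and> (\<forall>x y. y \<in> I \<longrightarrow> br x y \<in> I)"

definition simple_lie_algebra :: "(complex \<Rightarrow> 'g \<Rightarrow> 'g::ab_group_add) \<Rightarrow> ('g \<Rightarrow> 'g \<Rightarrow> 'g) \<Rightarrow> bool" where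
  "simple_lie_algebra s br \<longleftrightarrow> lie_algebra s br \<and> (\<exists>x y. br x y \<noteq> 0)
     \<and> (\<forall>I. lie_ideal s br I \<longrightarrow> I = {0} \<or> I = UNIV)"

definition ad_semisimple :: "(complex \<Rightarrow> 'g \<Rightarrow> 'g::ab_group_add) \<Rightarrow> ('g \<Rightarrow> 'g \<Rightarrow> 'g) \<Rightarrow> 'g \<Rightarrow> bool" where
  "ad_semisimple s br x \<longleftrightarrow> module.span s {y. \<exists>c. br x y = s c y} = UNIV"

definition toral_subalgebra :: "(complex \<Rightarrow> 'g \<Rightarrow> 'g::ab_group_add) \<Rightarrow> ('g \<Rightarrow> 'g \<Rightarrow> 'g) \<Rightarrow> 'g set \<Rightarrow> bool" where
  "toral_subalgebra s br H \<longleftrightarrow> module.subspace s H \<and> (\<forall>x\<in>H. \<forall>y\<in>H. br x y \<in> H)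
     \<and> (\<forall>x\<in>H. ad_semisimple s br x)"

text \<open>Cartan subalgebra of a (semi)simple Lie algebra = maximal toral subalgebra.\<close>
definition cartan_subalgebra :: "(complex \<Rightarrow> 'g \<Rightarrow> 'g::ab_group_add) \<Rightarrow> ('g \<Rightarrow> 'g \<Rightarrow> 'g) \<Rightarrow> 'g set \<Rightarrow> bool" where
  "cartan_subalgebra s br H \<longleftrightarrow> toral_subalgebra s br H
     \<and> (\<forall>H'. toral_subalgebra s br H' \<and> H \<subseteq> H' \<longrightarrow> H' = H)"

definition nondeg_invariant_form ::
  "(complex \<Rightarrow> 'g \<Rightarrow> 'g::ab_group_add) \<Rightarrow> ('g \<Rightarrow> 'g \<Rightarrow> 'g) \<Rightarrow> ('g \<Rightarrow> 'g \<Rightarrow> complex) \<Rightarrow> bool" where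
  "nondeg_invariant_form s br B \<longleftrightarrow>
     (\<forall>x. Vector_Spaces.linear s (*) (B x))
     \<and> (\<forall>x y. B x y = B y x)
     \<and> (\<forall>x y z. B (br x y) z = B x (br y z))
     \<and> (\<forall>x. (\<forall>y. B x y = 0) \<longrightarrow> x = 0)"

text \<open>Multi-indices in Z^n are functions 'n \<Rightarrow> int for a finite index type 'n with CARD('n) = n.
A representation of tau on V (scalar multiplication sV) is given by its values on the
spanning elements: agX X r v = (X \<otimes> t^r).v, aK m i v = (t^m K_i).v, ad i v = d_i.v.
A linear map from tau is the same as such data, linear in X, satisfying
sum_i m_i (t^m K_i) = 0; it is a Lie homomorphism iff the bracket relations hold on generators.\<close>

definition tau_module ::
  "(complex \<Rightarrow> 'g \<Rightarrow> 'g::ab_group_add) \<Rightarrow> ('g \<Rightarrow> 'g \<Rightarrow> 'g) \<Rightarrow> ('g \<Rightarrow> 'g \<Rightarrow> complex)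
   \<Rightarrow> (complex \<Rightarrow> 'v \<Rightarrow> 'v::ab_group_add)
   \<Rightarrow> ('g \<Rightarrow> ('n::finite \<Rightarrow> int) \<Rightarrow> 'v \<Rightarrow> 'v) \<Rightarrow> (('n \<Rightarrow> int) \<Rightarrow> 'n \<Rightarrow> 'v \<Rightarrow> 'v) \<Rightarrow> ('n \<Rightarrow> 'v \<Rightarrow> 'v)
   \<Rightarrow> bool" where
  "tau_module s br B sV agX aK ad \<longleftrightarrow>
     vector_space sV
     \<and> (\<forall>X r. Vector_Spaces.linear sV sV (agX X r))
     \<and> (\<forall>m i. Vector_Spaces.linear sV sV (aK m i))
     \<and> (\<forall>i. Vector_Spaces.linear sV sV (ad i))
     \<and> (\<forall>c X Y r v. agX (s c X + Y) r v = sV c (agX X r v) + agX Y r v)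
     \<and> (\<forall>m v. (\<Sum>i\<in>UNIV. sV (of_int (m i)) (aK m i v)) = 0)
     \<and> (\<forall>X Y r s' v. agX X r (agX Y s' v) - agX Y s' (agX X r v)
            = agX (br X Y) (\<lambda>j. r j + s' j) v
              + sV (B X Y) (\<Sum>i\<in>UNIV. sV (of_int (r i)) (aK (\<lambda>j. r j + s' j) i v)))
     \<and> (\<forall>X r m i v. agX X r (aK m i v) = aK m i (agX X r v))
     \<and> (\<forall>m i m' j v. aK m i (aK m' j v) = aK m' j (aK m i v))
     \<and> (\<forall>i X r v. ad i (agX X r v) - agX X r (ad i v) = sV (of_int (r i)) (agX X r v))
     \<and> (\<forall>i m j v. ad i (aK m j v) - aK m j (ad i v) = sV (of_int (m i)) (aK m j v))
     \<and> (\<forall>i j v. ad i (ad j v) = ad j (ad i v))"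

definition tau_invariant ::
  "('g \<Rightarrow> ('n \<Rightarrow> int) \<Rightarrow> 'v \<Rightarrow> 'v) \<Rightarrow> (('n \<Rightarrow> int) \<Rightarrow> 'n \<Rightarrow> 'v \<Rightarrow> 'v) \<Rightarrow> ('n \<Rightarrow> 'v \<Rightarrow> 'v)
   \<Rightarrow> 'v set \<Rightarrow> bool" where
  "tau_invariant agX aK ad W \<longleftrightarrow>
     (\<forall>X r. \<forall>v\<in>W. agX X r v \<in> W) \<and> (\<forall>m i. \<forall>v\<in>W. aK m i v \<in> W) \<and> (\<forall>i. \<forall>v\<in>W. ad i v \<in> W)"

definition tau_irreducible ::
  "(complex \<Rightarrow> 'v \<Rightarrow> 'v::ab_group_add)
   \<Rightarrow> ('g \<Rightarrow> ('n \<Rightarrow> int) \<Rightarrow> 'v \<Rightarrow> 'v) \<Rightarrow> (('n \<Rightarrow> int) \<Rightarrow> 'n \<Rightarrow> 'v \<Rightarrow> 'v) \<Rightarrow> ('n \<Rightarrow> 'v \<Rightarrow> 'v)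
   \<Rightarrow> bool" where
  "tau_irreducible sV agX aK ad \<longleftrightarrow> (\<exists>v::'v. v \<noteq> 0)
     \<and> (\<forall>W. module.subspace sV W \<and> tau_invariant agX aK ad W \<longrightarrow> W = {0} \<or> W = UNIV)"

text \<open>Weight space for the weight of the Cartan h = h0 + span(K_i) + D given by
mu on h0, kappa i = value on K_i, delta i = value on d_i.\<close>
definition weight_space ::
  "(complex \<Rightarrow> 'v \<Rightarrow> 'v::ab_group_add) \<Rightarrow> 'g set
   \<Rightarrow> ('g \<Rightarrow> ('n \<Rightarrow> int) \<Rightarrow> 'v \<Rightarrow> 'v) \<Rightarrow> (('n \<Rightarrow> int) \<Rightarrow> 'n \<Rightarrow> 'v \<Rightarrow> 'v) \<Rightarrow> ('n \<Rightarrow> 'v \<Rightarrow> 'v)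
   \<Rightarrow> ('g \<Rightarrow> complex) \<Rightarrow> ('n \<Rightarrow> complex) \<Rightarrow> ('n \<Rightarrow> complex) \<Rightarrow> 'v set" where
  "weight_space sV h agX aK ad \<mu> \<kappa> \<delta> =
     {v. (\<forall>H\<in>h. agX H (\<lambda>_. 0) v = sV (\<mu> H) v)
       \<and> (\<forall>i. aK (\<lambda>_. 0) i v = sV (\<kappa> i) v)
       \<and> (\<forall>i. ad i v = sV (\<delta> i) v)}"

definition fin_dim_weight_spaces ::
  "(complex \<Rightarrow> 'v \<Rightarrow> 'v::ab_group_add) \<Rightarrow> 'g set
   \<Rightarrow> ('g \<Rightarrow> ('n \<Rightarrow> int) \<Rightarrow> 'v \<Rightarrow> 'v) \<Rightarrow> (('n \<Rightarrow> int) \<Rightarrow> 'n \<Rightarrow> 'v \<Rightarrow> 'v) \<Rightarrow> ('n \<Rightarrow> 'v \<Rightarrow> 'v)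
   \<Rightarrow> bool" where
  "fin_dim_weight_spaces sV h agX aK ad \<longleftrightarrow>
     module.span sV (\<Union>\<mu> \<kappa> \<delta>. weight_space sV h agX aK ad \<mu> \<kappa> \<delta>) = UNIV
     \<and> (\<forall>\<mu> \<kappa> \<delta>. \<exists>Bs. finite Bs \<and> module.span sV Bs = weight_space sV h agX aK ad \<mu> \<kappa> \<delta>)"

definition central_operator ::
  "(complex \<Rightarrow> 'v \<Rightarrow> 'v::ab_group_add)
   \<Rightarrow> ('g \<Rightarrow> ('n \<Rightarrow> int) \<Rightarrow> 'v \<Rightarrow> 'v) \<Rightarrow> (('n \<Rightarrow> int) \<Rightarrow> 'n \<Rightarrow> 'v \<Rightarrow> 'v) \<Rightarrow> ('n \<Rightarrow> 'v \<Rightarrow> 'v)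
   \<Rightarrow> ('n \<Rightarrow> int) \<Rightarrow> ('v \<Rightarrow> 'v) \<Rightarrow> bool" where
  "central_operator sV agX aK ad m T \<longleftrightarrow>
     Vector_Spaces.linear sV sV T
     \<and> (\<forall>X r v. T (agX X r v) = agX X r (T v))
     \<and> (\<forall>m' j v. T (aK m' j v) = aK m' j (T v))
     \<and> (\<forall>i v. ad i (T v) - T (ad i v) = sV (of_int (m i)) (T v))"

text \<open>Action of the homogeneous central element z = sum_i c_i t^m K_i of degree m.\<close>
definition z_action ::
  "(complex \<Rightarrow> 'v \<Rightarrow> 'v::ab_group_add) \<Rightarrow> (('n::finite \<Rightarrow> int) \<Rightarrow> 'n \<Rightarrow> 'v \<Rightarrow> 'v)
   \<Rightarrow> ('n \<Rightarrow> int) \<Rightarrow> ('n \<Rightarrow> complex) \<Rightarrow> 'v \<Rightarrow> 'v" where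
  "z_action sV aK m c v = (\<Sum>i\<in>UNIV. sV (c i) (aK m i v))"

end

theory Submission
  imports Defs
begin

text \<open>The action of z is itself a central operator of degree m, so its kernel and its image
are \<tau>-submodules of V.  By irreducibility and z \<noteq> 0 the kernel is 0 and the image is V
(Schur's argument), so z is a linear bijection, and its inverse again commutes with the action
and shifts degrees by -m.\<close>

context
  fixes s :: "complex \<Rightarrow> 'g \<Rightarrow> 'g::ab_group_add"
    and br :: "'g \<Rightarrow> 'g \<Rightarrow> 'g"
    and B :: "'g \<Rightarrow> 'g \<Rightarrow> complex"
    and sV :: "complex \<Rightarrow> 'v \<Rightarrow> 'v::ab_group_add"
    and agX :: "'g \<Rightarrow> ('n::finite \<Rightarrow> int) \<Rightarrow> 'v \<Rightarrow> 'v"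
    and aK :: "('n \<Rightarrow> int) \<Rightarrow> 'n \<Rightarrow> 'v \<Rightarrow> 'v"
    and ad :: "'n \<Rightarrow> 'v \<Rightarrow> 'v"
  assumes tau: "tau_module s br B sV agX aK ad"
begin

interpretation V: vector_space_pair sV sV
  using tau by (simp add: tau_module_def vector_space_pair_def)

lemma tau_module_linear_agX: "Vector_Spaces.linear sV sV (agX X r)"
  and tau_module_linear_aK: "Vector_Spaces.linear sV sV (aK m i)"
  and tau_module_linear_ad: "Vector_Spaces.linear sV sV (ad i)"
  and tau_module_agX_aK_commute: "agX X r (aK m i v) = aK m i (agX X r v)"
  and tau_module_aK_commute: "aK m i (aK m' j v) = aK m' j (aK m i v)"
  and tau_module_ad_aK: "ad i (aK m j v) = aK m j (ad i v) + sV (of_int (m i)) (aK m j v)"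
  using tau unfolding tau_module_def by (simp_all add: diff_eq_eq add.commute)

lemma central_operator_z_action: "central_operator sV agX aK ad m (z_action sV aK m c)"
proof -
  have lin: "Vector_Spaces.linear sV sV (z_action sV aK m c)"
    unfolding z_action_def
    by (intro V.linear_compose_sum ballI V.linear_compose_scale_right tau_module_linear_aK)
  have "ad i (z_action sV aK m c v)
          = z_action sV aK m c (ad i v) + sV (of_int (m i)) (z_action sV aK m c v)" for i v
    by (simp add: z_action_def V.linear_sum[OF tau_module_linear_ad]
        V.linear_scale[OF tau_module_linear_ad] tau_module_ad_aK V.vs1.scale_right_distrib
        sum.distrib V.vs1.scale_sum_right mult.commute)
  then show ?thesis
    unfolding central_operator_def
    by (simp add: lin z_action_def V.linear_sum V.linear_scale tau_module_linear_agX
        tau_module_linear_aK tau_module_agX_aK_commute tau_module_aK_commute)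
qed

context
  fixes m :: "'n \<Rightarrow> int" and T :: "'v \<Rightarrow> 'v"
  assumes T: "central_operator sV agX aK ad m T"
begin

lemma central_operator_linear: "Vector_Spaces.linear sV sV T"
  and central_operator_agX: "T (agX X r v) = agX X r (T v)"
  and central_operator_aK: "T (aK m' j v) = aK m' j (T v)"
  and central_operator_ad: "ad i (T v) = T (ad i v) + sV (of_int (m i)) (T v)"
  using T unfolding central_operator_def by (simp_all add: diff_eq_eq add.commute)

lemma tau_invariant_central_operator_kernel: "tau_invariant agX aK ad {v. T v = 0}"
proof -
  have "T (ad i v) = 0" if "T v = 0" for i v
    using central_operator_ad[of i v] that by (simp add: V.linear_0[OF tau_module_linear_ad])
  then show ?thesis
    unfolding tau_invariant_def
    by (simp add: central_operator_agX central_operator_aK V.linear_0 tau_module_linear_agX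
        tau_module_linear_aK)
qed

lemma tau_invariant_central_operator_range: "tau_invariant agX aK ad (range T)"
proof -
  have "ad i (T w) = T (ad i w + sV (of_int (m i)) w)" for i w
    by (simp add: central_operator_ad V.linear_add[OF central_operator_linear]
        V.linear_scale[OF central_operator_linear])
  then show ?thesis
    unfolding tau_invariant_def
    by (auto simp: central_operator_agX[symmetric] central_operator_aK[symmetric])
qed

lemma bij_central_operator:
  assumes irr: "tau_irreducible sV agX aK ad" and nonzero: "\<exists>v. T v \<noteq> 0"
  shows "bij T"
proof (rule bijI)
  have "{v. T v = 0} = {0}"
    using irr nonzero tau_invariant_central_operator_kernel
      V.linear_subspace_kernel[OF central_operator_linear]
    unfolding tau_irreducible_def by blast
  then show "inj T"
    using V.linear_inj_iff_eq_0[OF central_operator_linear] by blast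
  have "range T \<noteq> {0}"
    using nonzero by auto
  then show "surj T"
    using irr tau_invariant_central_operator_range V.vs1.subspace_UNIV
      V.linear_subspace_image[OF central_operator_linear, of UNIV]
    unfolding tau_irreducible_def by blast
qed

lemma central_operator_inverse:
  assumes "bij T"
  obtains T' where "central_operator sV agX aK ad (\<lambda>i. - m i) T'"
    and "\<And>v. T' (T v) = v" and "\<And>v. T (T' v) = v"
proof -
  obtain T' where lin: "Vector_Spaces.linear sV sV T'" and "T' \<circ> T = id"
    using V.linear_injective_left_inverse[OF central_operator_linear] \<open>bij T\<close>
    by (auto simp: bij_def)
  then have left: "T' (T v) = v" for v
    by (simp add: fun_eq_iff)
  have right: "T (T' v) = v" for v
    using \<open>bij T\<close> left by (metis bij_def surj_f_inv_f)
  have "ad i (T' v) = T' (ad i v) + sV (of_int (- m i)) (T' v)" for i v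
  proof -
    have "ad i v = T (ad i (T' v)) + sV (of_int (m i)) v"
      using central_operator_ad[of i "T' v"] by (simp add: right)
    then have "T' (ad i v) = ad i (T' v) + sV (of_int (m i)) (T' v)"
      by (simp add: left V.linear_add[OF lin] V.linear_scale[OF lin])
    then show ?thesis
      by (simp add: V.vs1.scale_minus_left)
  qed
  moreover have "T' (agX X r v) = agX X r (T' v)" "T' (aK m' j v) = aK m' j (T' v)" for X r m' j v
    by (metis central_operator_agX central_operator_aK left right)+
  ultimately have "central_operator sV agX aK ad (\<lambda>i. - m i) T'"
    unfolding central_operator_def by (simp add: lin)
  then show thesis
    using left right by (rule that)
qed

end

end

theorem lemma4p4:
  fixes s :: "complex \<Rightarrow> 'g \<Rightarrow> 'g::ab_group_add"
    and br :: "'g \<Rightarrow> 'g \<Rightarrow> 'g"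
    and B :: "'g \<Rightarrow> 'g \<Rightarrow> complex"
    and h :: "'g set"
    and sV :: "complex \<Rightarrow> 'v \<Rightarrow> 'v::ab_group_add"
    and agX :: "'g \<Rightarrow> ('n::finite \<Rightarrow> int) \<Rightarrow> 'v \<Rightarrow> 'v"
    and aK :: "('n \<Rightarrow> int) \<Rightarrow> 'n \<Rightarrow> 'v \<Rightarrow> 'v"
    and ad :: "'n \<Rightarrow> 'v \<Rightarrow> 'v"
    and m :: "'n \<Rightarrow> int"
    and c :: "'n \<Rightarrow> complex"
  assumes "card (UNIV :: 'n set) \<ge> 2"
    and "simple_lie_algebra s br" and "fin_dim s"
    and "cartan_subalgebra s br h"
    and "nondeg_invariant_form s br B"
    and "tau_module s br B sV agX aK ad"
    and "tau_irreducible sV agX aK ad"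
    and "fin_dim_weight_spaces sV h agX aK ad"
    and "\<exists>v. z_action sV aK m c v \<noteq> 0"
  shows "\<exists>T. central_operator sV agX aK ad (\<lambda>i. - m i) T
           \<and> (\<forall>v. T (z_action sV aK m c v) = v)
           \<and> (\<forall>v. z_action sV aK m c (T v) = v)"
proof -
  have z: "central_operator sV agX aK ad m (z_action sV aK m c)"
    using \<open>tau_module s br B sV agX aK ad\<close> by (rule central_operator_z_action)
  have "bij (z_action sV aK m c)"
    using \<open>tau_module s br B sV agX aK ad\<close> z assms(7,9) by (rule bij_central_operator)
  with \<open>tau_module s br B sV agX aK ad\<close> z show ?thesis
    by (metis central_operator_inverse)
qed

end
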